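(* Let $A(Z,Z'_Y)$ be a polynomial in $Z\in\mathbb{R}^{2n}$, $Z'_Y\in\mathbb{R}^{2m}$ such that $$\mathscr{P}_n\circ(A\cdot\mathscr{E}_{n,m})\circ\mathscr{P}_m=A\cdot\mathscr{E}_{n,m}.$$ Then $A$ is a polynomial in $z=(z_1,\dots,z_n)$ and $\overline{z}'_Y=(\overline{z}'_1,\dots,\overline{z}'_m)$.
   Context: $m\le n$. For $Z\in\mathbb{R}^{2n}$ write $z_i=Z_{2i-1}+iZ_{2i}$; $\mathbb{R}^{2m}\subset\mathbb{R}^{2n}$ via the first $2m$ coordinates, $Z=(Z_Y,Z_N)$ with $Z_Y\in\mathbb{R}^{2m}$, and $z'_i$ likewise for $Z'$. Define the kernels $\mathscr{P}_k(Z,Z')=\exp\big(-\frac{\pi}{2}\sum_{i=1}^k(|z_i|^2+|z'_i|^2-2z_i\overline{z}'_i)\big)$ on $\mathbb{R}^{2k}\times\mathbb{R}^{2k}$ ($k=n,m$), and $\mathscr{E}_{n,m}(Z,Z'_Y)=\exp\big(-\frac{\pi}{2}\sum_{i=1}^m(|z_i|^2+|z'_i|^2-2z_i\overline{z}'_i)-\frac{\pi}{2}\sum_{i=m+1}^n|z_i|^2\big)$ on $\mathbb{R}^{2n}\times\mathbb{R}^{2m}$. $A\cdot\mathscr{E}_{n,m}$ is the pointwise product kernel, and kernels are composed as integral operators, $(K_1\circ K_2)(Z,Z'')=\int K_1(Z,Z')K_2(Z',Z'')\,dZ'$ with Lebesgue measure on the intermediate space ($\mathbb{R}^{2n}$ or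 $\mathbb{R}^{2m}$). *)

theory Defs
  imports "HOL-Analysis.Analysis"
begin

text \<open>Points of R^(2k) are functions nat => real, coordinates 0..2k-1 (0-indexed);
  Lebesgue measure on R^(2k) is the product of lborel over {..<2k}.\<close>

definition leb :: "nat \<Rightarrow> (nat \<Rightarrow> real) measure" where
  "leb k = PiM {..<2*k} (\<lambda>_. lborel)"

text \<open>complex coordinate z_i = Z_(2i-1) + i Z_(2i) (1-indexed); here 0-indexed i.\<close>
definition zc :: "(nat \<Rightarrow> real) \<Rightarrow> nat \<Rightarrow> complex" where
  "zc Z i = Complex (Z (2*i)) (Z (2*i+1))"

definition Pk :: "nat \<Rightarrow> (nat \<Rightarrow> real) \<Rightarrow> (nat \<Rightarrow> real) \<Rightarrow> complex" where
  "Pk k Z Z' = exp (- (of_real (pi/2)) *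
     (\<Sum>i<k. of_real ((cmod (zc Z i))\<^sup>2) + of_real ((cmod (zc Z' i))\<^sup>2)
              - 2 * zc Z i * cnj (zc Z' i)))"

definition Enm :: "nat \<Rightarrow> nat \<Rightarrow> (nat \<Rightarrow> real) \<Rightarrow> (nat \<Rightarrow> real) \<Rightarrow> complex" where
  "Enm n m Z Z' = exp (- (of_real (pi/2)) *
     (\<Sum>i<m. of_real ((cmod (zc Z i))\<^sup>2) + of_real ((cmod (zc Z' i))\<^sup>2)
              - 2 * zc Z i * cnj (zc Z' i))
     - (of_real (pi/2)) * (\<Sum>i\<in>{m..<n}. of_real ((cmod (zc Z i))\<^sup>2)))"

definition kcomp :: "nat \<Rightarrow> ((nat \<Rightarrow> real) \<Rightarrow> (nat \<Rightarrow> real) \<Rightarrow> complex)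
    \<Rightarrow> ((nat \<Rightarrow> real) \<Rightarrow> (nat \<Rightarrow> real) \<Rightarrow> complex)
    \<Rightarrow> (nat \<Rightarrow> real) \<Rightarrow> (nat \<Rightarrow> real) \<Rightarrow> complex" where
  "kcomp k K1 K2 Z Z'' = (\<integral>Z'. K1 Z Z' * K2 Z' Z'' \<partial>leb k)"

inductive cpoly :: "('a \<Rightarrow> complex) set \<Rightarrow> ('a \<Rightarrow> complex) \<Rightarrow> bool" for G where
  const: "cpoly G (\<lambda>x. c)"
| gen: "g \<in> G \<Longrightarrow> cpoly G g"
| add: "cpoly G f \<Longrightarrow> cpoly G g \<Longrightarrow> cpoly G (\<lambda>x. f x + g x)"
| mult: "cpoly G f \<Longrightarrow> cpoly G g \<Longrightarrow> cpoly G (\<lambda>x. f x * g x)"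

definition real_gens :: "nat \<Rightarrow> nat \<Rightarrow> ((nat \<Rightarrow> real) \<times> (nat \<Rightarrow> real) \<Rightarrow> complex) set" where
  "real_gens n m = {(\<lambda>(Z,W). complex_of_real (Z j)) | j. j < 2*n}
                 \<union> {(\<lambda>(Z,W). complex_of_real (W j)) | j. j < 2*m}"

definition hol_gens :: "nat \<Rightarrow> nat \<Rightarrow> ((nat \<Rightarrow> real) \<times> (nat \<Rightarrow> real) \<Rightarrow> complex) set" where
  "hol_gens n m = {(\<lambda>(Z,W). zc Z i) | i. i < n}
                \<union> {(\<lambda>(Z,W). cnj (zc W i)) | i. i < m}"

end

theory Submission
  imports Defs "HOL-Probability.Characteristic_Functions" "HOL-Real_Asymp.Real_Asymp"
begin

text \<open>Both kernels factor into Gaussians \<open>exp (- \<pi>/2 |z|\<^sup>2)\<close> and a pairing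
  \<open>exp (\<pi> z conj w)\<close>, so each of the two integrals in the composition is a Gaussian integral
  \<open>\<integral> p(y) exp (\<pi> (b conj y + y a) - \<pi> |y|\<^sup>2) dy\<close> of a polynomial \<open>p\<close>. In real coordinates
  it splits into the moments \<open>\<integral> x\<^sup>k exp (c x - \<pi> x\<^sup>2) dx = q\<^sub>k(c) exp (c\<^sup>2 / (4 \<pi>))\<close>, where
  integration by parts makes \<open>q\<^sub>k\<close> a polynomial; so the integral is \<open>exp (\<pi> a b)\<close> times a
  polynomial in \<open>a\<close>, \<open>b\<close> and the remaining variables. The integral over \<open>Z'\<close> therefore
  reproduces the factor \<open>E\<close> and leaves a polynomial in \<open>z\<close> and the real coordinates of
  \<open>Z'\<^sub>Y\<close>; the integral over \<open>Z''\<close> then turns the latter into \<open>conj z'\<^sub>Y\<close>. Hence the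
  left-hand side is \<open>R E\<close> with \<open>R\<close> a polynomial in \<open>z\<close> and \<open>conj z'\<^sub>Y\<close>, and \<open>A = R\<close>
  because \<open>E\<close> has no zeros.\<close>

lemma cpoly_diff:
  assumes "cpoly G f" and "cpoly G g"
  shows "cpoly G (\<lambda>x. f x - g x)"
proof -
  have "cpoly G (\<lambda>x. f x + (-1) * g x)"
    using assms by (intro cpoly.add cpoly.mult cpoly.const)
  then show ?thesis by simp
qed

lemma cpoly_sum_list:
  "(\<And>p. p \<in> set L \<Longrightarrow> cpoly G (f p)) \<Longrightarrow> cpoly G (\<lambda>x. \<Sum>p\<leftarrow>L. f p x)"
  by (induction L) (auto intro: cpoly.intros)

lemma cpoly_prod:
  "finite I \<Longrightarrow> (\<And>i. i \<in> I \<Longrightarrow> cpoly G (f i)) \<Longrightarrow> cpoly G (\<lambda>x. \<Prod>i\<in>I. f i x)"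
  by (induction rule: finite_induct) (auto intro: cpoly.intros)

lemma cpoly_mono: "cpoly G f \<Longrightarrow> G \<subseteq> G' \<Longrightarrow> cpoly G' f"
  by (induction rule: cpoly.induct) (auto intro: cpoly.intros)

lemma cpoly_comp:
  "cpoly G f \<Longrightarrow> (\<And>g. g \<in> G \<Longrightarrow> cpoly G' (\<lambda>x. g (\<phi> x))) \<Longrightarrow> cpoly G' (\<lambda>x. f (\<phi> x))"
  by (induction rule: cpoly.induct) (auto intro: cpoly.intros)

lemma cpoly_trans: "cpoly G f \<Longrightarrow> (\<And>g. g \<in> G \<Longrightarrow> cpoly G' g) \<Longrightarrow> cpoly G' f"
  using cpoly_comp[where \<phi> = "\<lambda>x. x"] by blast

lemma cpoly_eq_if_gens_eq:
  "cpoly G f \<Longrightarrow> (\<And>g. g \<in> G \<Longrightarrow> g x = g y) \<Longrightarrow> f x = f y"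
  by (induction rule: cpoly.induct) auto

lemma sum_list_mult_sum_list:
  fixes f :: "'a \<Rightarrow> 'c::semiring_0"
  shows "(\<Sum>p\<leftarrow>xs. f p) * (\<Sum>q\<leftarrow>ys. g q) = (\<Sum>pq\<leftarrow>List.product xs ys. f (fst pq) * g (snd pq))"
  by (induction xs) (simp_all add: distrib_right sum_list_const_mult o_def)

lemma cpoly_separate_variables:
  fixes F :: "'x \<times> 'y \<Rightarrow> complex" and h :: "'j \<Rightarrow> 'y \<Rightarrow> complex"
  assumes "cpoly ((\<lambda>g. g \<circ> fst) ` G \<union> (\<lambda>j (x, y). h j y) ` J) F" and "finite J"
  obtains L where "\<forall>p\<in>set L. cpoly G (fst p)"
    and "\<And>x y. F (x, y) = (\<Sum>p\<leftarrow>L. fst p x * (\<Prod>j\<in>J. h j y ^ snd p j))"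
proof -
  have "\<exists>L. (\<forall>p\<in>set L. cpoly G (fst p))
      \<and> (\<forall>x y. F (x, y) = (\<Sum>p\<leftarrow>L. fst p x * (\<Prod>j\<in>J. h j y ^ snd p j)))"
    using assms(1)
  proof (induction rule: cpoly.induct)
    case (const c)
    show ?case by (rule exI[of _ "[(\<lambda>x. c, \<lambda>j. 0)]"]) (auto intro: cpoly.const)
  next
    case (gen g)
    then consider g' where "g' \<in> G" "g = g' \<circ> fst" | j0 where "j0 \<in> J" "g = (\<lambda>(x, y). h j0 y)"
      by blast
    then show ?case
    proof cases
      case 1
      then show ?thesis by (intro exI[of _ "[(g', \<lambda>j. 0)]"]) (auto intro: cpoly.gen)
    next
      case 2
      have "(\<Prod>j\<in>J. h j y ^ (if j = j0 then 1 else 0)) = h j0 y" for y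
        using 2(1) assms(2) by (simp add: if_distrib[where f="\<lambda>k. _ ^ k"] prod.delta cong: if_cong)
      then show ?thesis using 2
        by (intro exI[of _ "[(\<lambda>x. 1, \<lambda>j. if j = j0 then 1 else 0)]"]) (auto intro: cpoly.const)
    qed
  next
    case (add f g)
    then obtain L1 L2 where "\<forall>p\<in>set L1. cpoly G (fst p)" "\<forall>p\<in>set L2. cpoly G (fst p)"
      "\<forall>x y. f (x, y) = (\<Sum>p\<leftarrow>L1. fst p x * (\<Prod>j\<in>J. h j y ^ snd p j))"
      "\<forall>x y. g (x, y) = (\<Sum>p\<leftarrow>L2. fst p x * (\<Prod>j\<in>J. h j y ^ snd p j))"
      by blast
    then show ?case by (intro exI[of _ "L1 @ L2"]) auto
  next
    case (mult f g)
    then obtain L1 L2 where L1: "\<forall>p\<in>set L1. cpoly G (fst p)"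
      "\<forall>x y. f (x, y) = (\<Sum>p\<leftarrow>L1. fst p x * (\<Prod>j\<in>J. h j y ^ snd p j))"
      and L2: "\<forall>p\<in>set L2. cpoly G (fst p)"
      "\<forall>x y. g (x, y) = (\<Sum>p\<leftarrow>L2. fst p x * (\<Prod>j\<in>J. h j y ^ snd p j))"
      by blast
    define L where "L = map (\<lambda>pq. (\<lambda>x. fst (fst pq) x * fst (snd pq) x,
        \<lambda>j. snd (fst pq) j + snd (snd pq) j)) (List.product L1 L2)"
    have "\<forall>p\<in>set L. cpoly G (fst p)"
      using L1(1) L2(1) by (force simp: L_def intro: cpoly.mult)
    moreover have "f (x, y) * g (x, y) = (\<Sum>p\<leftarrow>L. fst p x * (\<Prod>j\<in>J. h j y ^ snd p j))" for x y
      unfolding L1(2)[rule_format] L2(2)[rule_format] sum_list_mult_sum_list L_def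
      by (simp add: o_def power_add prod.distrib mult_ac)
    ultimately show ?case by blast
  qed
  then show ?thesis using that by blast
qed

definition gauss_monomial :: "nat \<Rightarrow> complex \<Rightarrow> complex \<Rightarrow> complex" where
  "gauss_monomial k c z = z ^ k * exp (c * z - of_real pi * z\<^sup>2)"

definition gauss_moment :: "nat \<Rightarrow> complex \<Rightarrow> complex" where
  "gauss_moment k c = (\<integral>x. gauss_monomial k c (of_real x) \<partial>lborel)"

lemma power_le_fact_mult_exp:
  assumes "0 \<le> (x::real)"
  shows "x ^ k \<le> fact k * exp x"
proof -
  have "summable (\<lambda>n. x ^ n /\<^sub>R fact n)"
    using exp_converges[of x] by (simp add: sums_iff)
  moreover have "0 \<le> x ^ n /\<^sub>R fact n" for n
    using assms by simp
  ultimately have "x ^ k /\<^sub>R fact k \<le> (\<Sum>n. x ^ n /\<^sub>R fact n)"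
    using sum_le_suminf[of "\<lambda>n. x ^ n /\<^sub>R fact n" "{k}"] by simp
  also have "\<dots> = exp x"
    using exp_converges[of x] by (simp add: sums_iff)
  finally show ?thesis by (simp add: field_simps)
qed

lemma norm_gauss_monomial_of_real:
  "norm (gauss_monomial k c (of_real x)) = \<bar>x\<bar> ^ k * exp (Re c * x - pi * x\<^sup>2)"
proof -
  have "Re (c * of_real x - of_real pi * (of_real x)\<^sup>2) = Re c * x - pi * x\<^sup>2"
    by (simp add: power2_eq_square)
  then show ?thesis by (simp add: gauss_monomial_def norm_mult norm_power)
qed

lemma norm_gauss_monomial_of_real_le:
  fixes c :: complex
  defines "r \<equiv> \<bar>Re c\<bar> + 1"
  shows "norm (gauss_monomial k c (of_real x))
    \<le> fact k * (exp (r * x - pi * x\<^sup>2) + exp (- r * x - pi * x\<^sup>2))"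
proof -
  have "norm (gauss_monomial k c (of_real x)) \<le> fact k * exp \<bar>x\<bar> * exp (Re c * x - pi * x\<^sup>2)"
    unfolding norm_gauss_monomial_of_real by (intro mult_right_mono power_le_fact_mult_exp) auto
  also have "\<dots> = fact k * exp (\<bar>x\<bar> + Re c * x - pi * x\<^sup>2)"
    by (simp add: exp_add[symmetric] algebra_simps)
  also have "\<dots> \<le> fact k * (exp (r * x - pi * x\<^sup>2) + exp (- r * x - pi * x\<^sup>2))"
  proof (intro mult_left_mono)
    have "\<bar>x\<bar> + Re c * x \<le> r * x \<or> \<bar>x\<bar> + Re c * x \<le> - r * x"
    proof (cases "x \<ge> 0")
      case True
      then have "Re c * x \<le> \<bar>Re c\<bar> * x" by (intro mult_right_mono) auto
      then show ?thesis using True by (auto simp: r_def algebra_simps)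
    next
      case False
      then have "Re c * x \<le> - \<bar>Re c\<bar> * x" by (intro mult_right_mono_neg) auto
      then show ?thesis using False by (auto simp: r_def algebra_simps)
    qed
    then show "exp (\<bar>x\<bar> + Re c * x - pi * x\<^sup>2) \<le> exp (r * x - pi * x\<^sup>2) + exp (- r * x - pi * x\<^sup>2)"
      by (smt (verit) exp_gt_zero exp_le_cancel_iff)
  qed auto
  finally show ?thesis .
qed

lemma continuous_on_gauss_monomial_of_real [continuous_intros]:
  "continuous_on A (\<lambda>x. gauss_monomial k c (of_real x))"
  unfolding gauss_monomial_def by (intro continuous_intros)

lemma integrable_gauss_monomial: "integrable lborel (\<lambda>x. gauss_monomial k c (of_real x))"
proof (rule Bochner_Integration.integrable_bound)
  let ?r = "\<bar>Re c\<bar> + 1"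
  have "integrable lborel (\<lambda>x::real. exp (b * x - pi * x\<^sup>2))" for b
  proof -
    have "exp (b * x - pi * x\<^sup>2) = exp (b\<^sup>2 / (4 * pi)) * normal_density (b / (2 * pi)) (1 / sqrt (2 * pi)) x" for x
    proof -
      have "b * x - pi * x\<^sup>2 = b\<^sup>2 / (4 * pi) + (- (x - b / (2 * pi))\<^sup>2 * pi)"
        by (simp add: field_simps power2_eq_square)
      then show ?thesis
        by (simp add: normal_density_def power2_eq_square exp_add[symmetric])
    qed
    then show ?thesis by (simp add: integrable_mult_right)
  qed
  then show "integrable lborel (\<lambda>x. fact k * (exp (?r * x - pi * x\<^sup>2) + exp (- ?r * x - pi * x\<^sup>2)))"
    by (intro integrable_mult_right Bochner_Integration.integrable_add)
  show "AE x in lborel. norm (gauss_monomial k c (of_real x))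
      \<le> norm (fact k * (exp (?r * x - pi * x\<^sup>2) + exp (- ?r * x - pi * x\<^sup>2)))"
    using norm_gauss_monomial_of_real_le[of k c] by (intro AE_I2) (auto intro: order.trans)
  show "(\<lambda>x. gauss_monomial k c (of_real x)) \<in> borel_measurable lborel"
    by (simp add: borel_measurable_continuous_onI continuous_on_gauss_monomial_of_real)
qed

lemma gauss_monomial_of_real_tendsto_0:
  "((\<lambda>x. gauss_monomial k c (of_real x)) \<longlongrightarrow> 0) at_top"
  "((\<lambda>x. gauss_monomial k c (of_real x)) \<longlongrightarrow> 0) at_bot"
proof -
  let ?r = "\<bar>Re c\<bar> + 1"
  let ?bound = "\<lambda>x. fact k * (exp (?r * x - pi * x\<^sup>2) + exp (- ?r * x - pi * x\<^sup>2))"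
  have "(?bound \<longlongrightarrow> 0) at_top" "(?bound \<longlongrightarrow> 0) at_bot"
    by real_asymp+
  then show "((\<lambda>x. gauss_monomial k c (of_real x)) \<longlongrightarrow> 0) at_top"
    "((\<lambda>x. gauss_monomial k c (of_real x)) \<longlongrightarrow> 0) at_bot"
    by (auto intro: Lim_null_comparison[OF always_eventually] norm_gauss_monomial_of_real_le)
qed

lemma has_field_derivative_gauss_monomial:
  "(gauss_monomial k c has_field_derivative
     of_nat k * gauss_monomial (k - 1) c z + c * gauss_monomial k c z
       - 2 * of_real pi * gauss_monomial (Suc k) c z) (at z)"
proof -
  have "(gauss_monomial k c has_field_derivative
     of_nat k * z ^ (k - 1) * exp (c * z - of_real pi * z\<^sup>2)
       + z ^ k * (exp (c * z - of_real pi * z\<^sup>2) * (c - of_real pi * (2 * z)))) (at z)"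
    unfolding gauss_monomial_def[abs_def]
    by (auto intro!: derivative_eq_intros simp: power2_eq_square algebra_simps)
  then show ?thesis by (simp add: gauss_monomial_def algebra_simps)
qed

lemma gauss_moment_recurrence:
  "of_nat k * gauss_moment (k - 1) c + c * gauss_moment k c
     - 2 * of_real pi * gauss_moment (Suc k) c = 0"
proof -
  let ?g = "\<lambda>k x. gauss_monomial k c (of_real x)"
  let ?f = "\<lambda>x. of_nat k * ?g (k - 1) x + c * ?g k x - 2 * of_real pi * ?g (Suc k) x"
  have int: "integrable lborel ?f"
    by (intro Bochner_Integration.integrable_diff Bochner_Integration.integrable_add
        integrable_mult_right integrable_gauss_monomial)
  have "interval_lebesgue_integral lborel (-\<infinity>) \<infinity> ?f = 0 - 0"
  proof (rule interval_integral_FTC_integrable[where F = "?g k"])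
    show "(?g k has_vector_derivative ?f x) (at x)" for x
      by (rule has_vector_derivative_real_field[OF has_field_derivative_gauss_monomial])
    show "isCont ?f x" for x
      by (intro continuous_intros continuous_on_interior[of UNIV]) auto
    show "set_integrable lborel (einterval (-\<infinity>) \<infinity>) ?f"
      using int by (simp add: set_integrable_def)
    show "((?g k \<circ> real_of_ereal) \<longlongrightarrow> 0) (at_right (-\<infinity>))"
      "((?g k \<circ> real_of_ereal) \<longlongrightarrow> 0) (at_left \<infinity>)"
      by (simp_all add: ereal_tendsto_simps1 gauss_monomial_of_real_tendsto_0)
  qed simp
  then have "integral\<^sup>L lborel ?f = 0"
    by (simp add: interval_lebesgue_integral_def set_lebesgue_integral_def)
  then show ?thesis
    unfolding gauss_moment_def
    by (simp add: integrable_gauss_monomial)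
qed

lemma fourier_transform_gaussian:
  "(\<integral>x. complex_of_real (exp (- x\<^sup>2 / 2)) * iexp (t * x) \<partial>lborel) = sqrt (2 * pi) * exp (- t\<^sup>2 / 2)"
proof -
  have "char std_normal_distribution t = (\<integral>x. std_normal_density x *\<^sub>R iexp (t * x) \<partial>lborel)"
    unfolding char_def by (subst integral_density) auto
  also have "\<dots> = (1 / sqrt (2 * pi)) * (\<integral>x. complex_of_real (exp (- x\<^sup>2 / 2)) * iexp (t * x) \<partial>lborel)"
    unfolding std_normal_density_def scaleR_conv_of_real
    by (simp add: integral_mult_right_zero[symmetric] mult.assoc del: of_real_mult)
  finally show ?thesis
    by (simp add: char_std_normal_distribution field_simps)
qed

text \<open>The substitution \<open>x = \<mu> + \<sigma> t\<close> completes the square in the real part of \<open>c\<close>; the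
  imaginary part becomes the frequency of a Fourier transform.\<close>
lemma gauss_moment_0: "gauss_moment 0 c = exp (c\<^sup>2 / (4 * of_real pi))"
proof -
  define a b where "a = Re c" and "b = Im c"
  define \<sigma> \<mu> where "\<sigma> = 1 / sqrt (2 * pi)" and "\<mu> = a / (2 * pi)"
  have c: "c = Complex a b" by (simp add: a_def b_def)
  have \<sigma>: "\<sigma> > 0" "\<sigma>\<^sup>2 = 1 / (2 * pi)" by (auto simp: \<sigma>_def power_divide)
  have affine: "gauss_monomial 0 c (of_real (\<mu> + \<sigma> * x))
      = exp (c * \<mu> - pi * \<mu>\<^sup>2) * (complex_of_real (exp (- x\<^sup>2 / 2)) * iexp ((b * \<sigma>) * x))" for x
  proof -
    have "c * of_real (\<mu> + \<sigma> * x) - of_real pi * (of_real (\<mu> + \<sigma> * x))\<^sup>2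
       = (c * \<mu> - pi * \<mu>\<^sup>2) + (of_real (- x\<^sup>2 / 2) + \<i> * of_real ((b * \<sigma>) * x))"
      using \<sigma>(2) unfolding c \<mu>_def by (simp add: complex_eq_iff power2_eq_square field_simps)
    then show ?thesis
      by (simp only: gauss_monomial_def power_0 mult_1_left exp_add exp_of_real)
  qed
  have "gauss_moment 0 c = \<bar>\<sigma>\<bar> *\<^sub>R (\<integral>x. gauss_monomial 0 c (of_real (\<mu> + \<sigma> * x)) \<partial>lborel)"
    unfolding gauss_moment_def using \<sigma>(1) by (intro lborel_integral_real_affine) simp
  also have "\<dots> = \<sigma> * exp (c * \<mu> - pi * \<mu>\<^sup>2) * (sqrt (2 * pi) * exp (- (b * \<sigma>)\<^sup>2 / 2))"
    by (simp only: affine integral_mult_right_zero fourier_transform_gaussian)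
      (use \<sigma>(1) in \<open>simp add: scaleR_conv_of_real\<close>)
  also have "\<dots> = exp (c * \<mu> - pi * \<mu>\<^sup>2) * exp (of_real (- (b * \<sigma>)\<^sup>2 / 2))"
    by (simp add: \<sigma>_def flip: exp_of_real)
  also have "\<dots> = exp (c * \<mu> - pi * \<mu>\<^sup>2 + of_real (- (b * \<sigma>)\<^sup>2 / 2))"
    by (simp only: exp_add)
  also have "c * \<mu> - pi * \<mu>\<^sup>2 + of_real (- (b * \<sigma>)\<^sup>2 / 2) = c\<^sup>2 / (4 * of_real pi)"
    using \<sigma>(2) unfolding c \<mu>_def
    by (simp add: complex_eq_iff power2_eq_square field_simps)
  finally show ?thesis .
qed

fun gauss_moment_poly :: "nat \<Rightarrow> complex \<Rightarrow> complex" where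
  "gauss_moment_poly 0 c = 1"
| "gauss_moment_poly (Suc 0) c = c / (2 * of_real pi)"
| "gauss_moment_poly (Suc (Suc k)) c =
     (c * gauss_moment_poly (Suc k) c + of_nat (Suc k) * gauss_moment_poly k c) / (2 * of_real pi)"

lemma gauss_moment_eq: "gauss_moment k c = gauss_moment_poly k c * exp (c\<^sup>2 / (4 * of_real pi))"
proof (induction k rule: induct_nat_012)
  case 0
  show ?case by (simp add: gauss_moment_0)
next
  case 1
  show ?case
    using gauss_moment_recurrence[of 0 c] by (simp add: gauss_moment_0 field_simps)
next
  case (ge2 k)
  then show ?case
    using gauss_moment_recurrence[of "Suc k" c] by (simp add: field_simps)
qed

lemma cpoly_gauss_moment_poly: "cpoly G g \<Longrightarrow> cpoly G (\<lambda>x. gauss_moment_poly k (g x))"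
proof (induction k rule: induct_nat_012)
  case 0
  show ?case by (simp add: cpoly.const)
next
  case 1
  then have "cpoly G (\<lambda>x. 1 / (2 * of_real pi) * g x)" by (intro cpoly.mult cpoly.const)
  then show ?case by simp
next
  case (ge2 k)
  then have "cpoly G (\<lambda>x. 1 / (2 * of_real pi) * (g x * gauss_moment_poly (Suc k) (g x)
      + of_nat (Suc k) * gauss_moment_poly k (g x)))"
    by (intro cpoly.mult cpoly.add cpoly.const) auto
  then show ?case by (simp add: field_simps)
qed

definition gauss_factor :: "nat \<Rightarrow> (nat \<Rightarrow> real) \<Rightarrow> complex" where
  "gauss_factor k Z = exp (- of_real (pi / 2) * (\<Sum>i<k. of_real ((cmod (zc Z i))\<^sup>2)))"

definition gauss_exp ::
    "nat \<Rightarrow> (nat \<Rightarrow> complex) \<Rightarrow> (nat \<Rightarrow> complex) \<Rightarrow> (nat \<Rightarrow> real) \<Rightarrow> complex" where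
  "gauss_exp k a b Y =
     gauss_factor k Y ^ 2 * exp (of_real pi * (\<Sum>i<k. zc Y i * a i + b i * cnj (zc Y i)))"

text \<open>For \<open>y = s + i t\<close> one has \<open>\<pi> (y a + b conj y) = \<pi> (a + b) s + i \<pi> (a - b) t\<close>, so
  \<open>gauss_exp\<close> is a product of one-dimensional Gaussians with these linear coefficients.\<close>
definition gauss_coeff :: "(nat \<Rightarrow> complex) \<Rightarrow> (nat \<Rightarrow> complex) \<Rightarrow> nat \<Rightarrow> complex" where
  "gauss_coeff a b j = (if even j then of_real pi * (a (j div 2) + b (j div 2))
                        else \<i> * of_real pi * (a (j div 2) - b (j div 2)))"

lemma sum_lessThan_double: "(\<Sum>j<2 * (k::nat). f j) = (\<Sum>i<k. f (2 * i) + f (2 * i + 1))"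
  by (induction k) (simp_all add: add.assoc)

lemma gauss_exp_eq_prod:
  "gauss_exp k a b Y
     = (\<Prod>j<2 * k. exp (gauss_coeff a b j * of_real (Y j) - of_real pi * (of_real (Y j))\<^sup>2))"
proof -
  have pair: "gauss_coeff a b (2 * i) * of_real s - of_real pi * (of_real s)\<^sup>2
      + (gauss_coeff a b (2 * i + 1) * of_real t - of_real pi * (of_real t)\<^sup>2)
    = of_real pi * (Complex s t * a i + b i * cnj (Complex s t))
      + 2 * (- of_real (pi / 2) * of_real ((cmod (Complex s t))\<^sup>2))" for i s t
    unfolding complex_norm_square gauss_coeff_def
    by (simp add: complex_eq_iff algebra_simps power2_eq_square)
  have "(\<Prod>j<2 * k. exp (gauss_coeff a b j * of_real (Y j) - of_real pi * (of_real (Y j))\<^sup>2))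
      = exp (\<Sum>i<k. of_real pi * (zc Y i * a i + b i * cnj (zc Y i))
                       + 2 * (- of_real (pi / 2) * of_real ((cmod (zc Y i))\<^sup>2)))"
    by (subst exp_sum[symmetric]) (simp_all only: finite_lessThan sum_lessThan_double zc_def pair)
  also have "\<dots> = gauss_exp k a b Y"
    unfolding gauss_exp_def gauss_factor_def power2_eq_square mult_exp_exp
    by (rule arg_cong[where f = exp]) (simp add: sum.distrib sum_subtractf sum_negf sum_distrib_left algebra_simps)
  finally show ?thesis ..
qed

lemma has_bochner_integral_sum_list:
  fixes f :: "'b \<Rightarrow> 'a \<Rightarrow> 'c::{banach,second_countable_topology}"
  shows "(\<And>p. p \<in> set L \<Longrightarrow> has_bochner_integral M (f p) (I p))
    \<Longrightarrow> has_bochner_integral M (\<lambda>x. \<Sum>p\<leftarrow>L. f p x) (\<Sum>p\<leftarrow>L. I p)"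
  by (induction L) auto

lemma sum_gauss_coeff_squares:
  "(\<Sum>j<2 * k. (gauss_coeff a b j)\<^sup>2 / (4 * of_real pi)) = of_real pi * (\<Sum>i<k. a i * b i)"
proof -
  have "(gauss_coeff a b (2 * i))\<^sup>2 / (4 * of_real pi) + (gauss_coeff a b (2 * i + 1))\<^sup>2 / (4 * of_real pi)
      = of_real pi * (a i * b i)" for i
    unfolding gauss_coeff_def by (simp add: field_simps power2_eq_square)
  then show ?thesis
    unfolding sum_lessThan_double by (simp add: sum_distrib_left)
qed

lemma has_bochner_integral_monomial_gauss_exp:
  "has_bochner_integral (leb k) (\<lambda>Y. (\<Prod>j<2 * k. of_real (Y j) ^ \<alpha> j) * gauss_exp k a b Y)
     ((\<Prod>j<2 * k. gauss_moment_poly (\<alpha> j) (gauss_coeff a b j)) * exp (of_real pi * (\<Sum>i<k. a i * b i)))"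
proof -
  interpret product_sigma_finite "\<lambda>_::nat. lborel"
    by (simp add: product_sigma_finite_def sigma_finite_lborel)
  let ?f = "\<lambda>j x. gauss_monomial (\<alpha> j) (gauss_coeff a b j) (of_real x)"
  have integrand: "(\<Prod>j<2 * k. of_real (Y j) ^ \<alpha> j) * gauss_exp k a b Y = (\<Prod>j<2 * k. ?f j (Y j))" for Y
    by (simp add: gauss_exp_eq_prod gauss_monomial_def prod.distrib)
  have "integrable (leb k) (\<lambda>Y. \<Prod>j<2 * k. ?f j (Y j))"
    unfolding leb_def by (intro product_integrable_prod integrable_gauss_monomial) auto
  moreover have "(\<integral>Y. (\<Prod>j<2 * k. ?f j (Y j)) \<partial>leb k) = (\<Prod>j<2 * k. gauss_moment (\<alpha> j) (gauss_coeff a b j))"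
    unfolding leb_def gauss_moment_def by (intro product_integral_prod integrable_gauss_monomial) auto
  moreover have "(\<Prod>j<2 * k. gauss_moment (\<alpha> j) (gauss_coeff a b j))
      = (\<Prod>j<2 * k. gauss_moment_poly (\<alpha> j) (gauss_coeff a b j)) * exp (of_real pi * (\<Sum>i<k. a i * b i))"
    by (simp add: gauss_moment_eq prod.distrib exp_sum sum_gauss_coeff_squares[symmetric])
  ultimately show ?thesis
    unfolding integrand has_bochner_integral_iff by simp
qed

lemma cpoly_gauss_coeff:
  assumes "\<And>i. i < k \<Longrightarrow> cpoly G (\<lambda>x. a x i)" and "\<And>i. i < k \<Longrightarrow> cpoly G (\<lambda>x. b x i)"
    and "j < 2 * k"
  shows "cpoly G (\<lambda>x. gauss_coeff (a x) (b x) j)"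
proof -
  have "j div 2 < k" using assms(3) by simp
  then have "cpoly G (\<lambda>x. of_real pi * (a x (j div 2) + b x (j div 2)))"
    and "cpoly G (\<lambda>x. \<i> * of_real pi * (a x (j div 2) - b x (j div 2)))"
    using assms(1,2) by (intro cpoly.mult cpoly.add cpoly_diff cpoly.const; blast)+
  then show ?thesis by (cases "even j") (simp_all add: gauss_coeff_def)
qed

lemma integral_cpoly_gauss_exp:
  fixes F :: "'x \<Rightarrow> (nat \<Rightarrow> real) \<Rightarrow> complex" and a b :: "'x \<Rightarrow> nat \<Rightarrow> complex"
  assumes "cpoly ((\<lambda>g. g \<circ> fst) ` G \<union> (\<lambda>j (x, Y). complex_of_real (Y j)) ` {..<2 * k}) (case_prod F)"
  obtains R where "cpoly (G \<union> {(\<lambda>x. a x i) | i. i < k} \<union> {(\<lambda>x. b x i) | i. i < k}) R"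
    and "\<And>x. (\<integral>Y. F x Y * gauss_exp k (a x) (b x) Y \<partial>leb k)
           = R x * exp (of_real pi * (\<Sum>i<k. a x i * b x i))"
proof -
  obtain L where L: "\<forall>p\<in>set L. cpoly G (fst p)"
    and F: "\<And>x Y. case_prod F (x, Y) = (\<Sum>p\<leftarrow>L. fst p x * (\<Prod>j<2 * k. of_real (Y j) ^ snd p j))"
    using cpoly_separate_variables[OF assms] by blast
  define R where "R x = (\<Sum>p\<leftarrow>L. fst p x * (\<Prod>j<2 * k. gauss_moment_poly (snd p j) (gauss_coeff (a x) (b x) j)))" for x
  let ?G = "G \<union> {(\<lambda>x. a x i) | i. i < k} \<union> {(\<lambda>x. b x i) | i. i < k}"
  have "cpoly ?G R"
    unfolding R_def
    by (intro cpoly_sum_list cpoly.mult cpoly_prod cpoly_gauss_moment_poly cpoly_gauss_coeff)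
      (use L in \<open>auto intro: cpoly_mono cpoly.gen\<close>)
  moreover have "(\<integral>Y. F x Y * gauss_exp k (a x) (b x) Y \<partial>leb k)
      = R x * exp (of_real pi * (\<Sum>i<k. a x i * b x i))" for x
  proof -
    let ?mon = "\<lambda>p Y. (\<Prod>j<2 * k. complex_of_real (Y j) ^ snd p j)"
    let ?E = "exp (of_real pi * (\<Sum>i<k. a x i * b x i))"
    have integrand: "F x Y * gauss_exp k (a x) (b x) Y
        = (\<Sum>p\<leftarrow>L. fst p x * (?mon p Y * gauss_exp k (a x) (b x) Y))" for Y
      using F[of x Y] by (simp add: sum_list_mult_const[symmetric] mult.assoc)
    have moments: "(\<Sum>p\<leftarrow>L. fst p x * ((\<Prod>j<2 * k. gauss_moment_poly (snd p j) (gauss_coeff (a x) (b x) j)) * ?E))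
        = R x * ?E"
      unfolding R_def sum_list_mult_const[symmetric] by (simp add: mult.assoc)
    have "has_bochner_integral (leb k)
        (\<lambda>Y. \<Sum>p\<leftarrow>L. fst p x * (?mon p Y * gauss_exp k (a x) (b x) Y))
        (\<Sum>p\<leftarrow>L. fst p x * ((\<Prod>j<2 * k. gauss_moment_poly (snd p j) (gauss_coeff (a x) (b x) j)) * ?E))"
      by (intro has_bochner_integral_sum_list has_bochner_integral_mult_right
          has_bochner_integral_monomial_gauss_exp)
    then show ?thesis
      unfolding integrand moments by (rule has_bochner_integral_integral_eq)
  qed
  ultimately show ?thesis using that by blast
qed

lemma Pk_eq:
  "Pk k Z Y = gauss_factor k Z * gauss_factor k Y * exp (of_real pi * (\<Sum>i<k. zc Z i * cnj (zc Y i)))"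
  unfolding Pk_def gauss_factor_def mult_exp_exp
  by (rule arg_cong[where f = exp]) (simp add: sum.distrib sum_subtractf sum_negf sum_distrib_left algebra_simps)

lemma Enm_eq:
  assumes "m \<le> n"
  shows "Enm n m Z W
    = gauss_factor n Z * gauss_factor m W * exp (of_real pi * (\<Sum>i<m. zc Z i * cnj (zc W i)))"
proof -
  have split: "(\<Sum>i<n. f i) = (\<Sum>i<m. f i) + (\<Sum>i\<in>{m..<n}. f i)" for f :: "nat \<Rightarrow> complex"
    using assms by (metis atLeast0LessThan le0 sum.atLeastLessThan_concat)
  show ?thesis
    unfolding Enm_def gauss_factor_def mult_exp_exp split
    by (rule arg_cong[where f = exp]) (simp add: sum.distrib sum_subtractf sum_negf sum_distrib_left algebra_simps)
qed

lemma cnj_zc: "cnj (zc W i) = complex_of_real (W (2 * i)) - \<i> * complex_of_real (W (2 * i + 1))"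
  by (simp add: zc_def complex_eq_iff)

definition hol_real_gens :: "nat \<Rightarrow> nat \<Rightarrow> ((nat \<Rightarrow> real) \<times> (nat \<Rightarrow> real) \<Rightarrow> complex) set" where
  "hol_real_gens n m = {(\<lambda>(Z, W). zc Z i) | i. i < n}
                     \<union> {(\<lambda>(Z, W). complex_of_real (W j)) | j. j < 2 * m}"

lemma kcomp_Pk_Enm:
  assumes "m \<le> n" and "cpoly (real_gens n m) F"
  obtains R where "cpoly (hol_real_gens n m) R"
    and "kcomp n (Pk n) (\<lambda>Y W. F (Y, W) * Enm n m Y W) = (\<lambda>Z W. R (Z, W) * Enm n m Z W)"
proof -
  let ?G = "{(\<lambda>(Z, W). complex_of_real (W j)) | j. j < 2 * m}"
  let ?a = "\<lambda>x i. if i < m then cnj (zc (snd x) i) else 0"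
  let ?b = "\<lambda>x. zc (fst x)"
  have "cpoly ((\<lambda>g. g \<circ> fst) ` ?G \<union> (\<lambda>j (x, Y). complex_of_real (Y j)) ` {..<2 * n})
      (\<lambda>xY. F (snd xY, snd (fst xY)))"
  proof (rule cpoly_comp[OF assms(2)], rule cpoly.gen)
    fix g assume "g \<in> real_gens n m"
    then show "(\<lambda>xY. g (snd xY, snd (fst xY)))
        \<in> (\<lambda>g. g \<circ> fst) ` ?G \<union> (\<lambda>j (x, Y). complex_of_real (Y j)) ` {..<2 * n}"
      unfolding real_gens_def by (auto simp: image_iff o_def split_def)
  qed
  then have integrand_poly: "cpoly ((\<lambda>g. g \<circ> fst) ` ?G \<union> (\<lambda>j (x, Y). complex_of_real (Y j)) ` {..<2 * n})
      (\<lambda>(x, Y). F (Y, snd x))"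
    by (simp add: split_def)
  obtain R where R: "cpoly (?G \<union> {(\<lambda>x. ?a x i) | i. i < n} \<union> {(\<lambda>x. ?b x i) | i. i < n}) R"
    and int: "\<And>x. (\<integral>Y. F (Y, snd x) * gauss_exp n (?a x) (?b x) Y \<partial>leb n)
           = R x * exp (of_real pi * (\<Sum>i<n. ?a x i * ?b x i))"
    using integral_cpoly_gauss_exp[OF integrand_poly, of ?a ?b] by blast
  have coordinate: "cpoly (hol_real_gens n m) (\<lambda>x. complex_of_real (snd x j))" if "j < 2 * m" for j
    using that by (intro cpoly.gen) (auto simp: hol_real_gens_def split_def)
  have "cpoly (hol_real_gens n m) R"
  proof (rule cpoly_trans[OF R])
    fix g assume "g \<in> ?G \<union> {(\<lambda>x. ?a x i) | i. i < n} \<union> {(\<lambda>x. ?b x i) | i. i < n}"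
    then consider j where "j < 2 * m" "g = (\<lambda>(Z, W). complex_of_real (W j))"
      | i where "g = (\<lambda>x. ?a x i)" | i where "i < n" "g = (\<lambda>x. ?b x i)"
      by blast
    then show "cpoly (hol_real_gens n m) g"
    proof cases
      case 1
      then show ?thesis by (auto simp: hol_real_gens_def intro: cpoly.gen)
    next
      case (2 i)
      have "cpoly (hol_real_gens n m)
          (\<lambda>x. complex_of_real (snd x (2 * i)) - \<i> * complex_of_real (snd x (2 * i + 1)))"
        if "i < m"
        using that by (intro cpoly_diff cpoly.mult cpoly.const coordinate) auto
      then show ?thesis
        using 2 by (cases "i < m") (simp_all add: cnj_zc cpoly.const)
    next
      case 3
      then show ?thesis by (auto simp: hol_real_gens_def split_def intro: cpoly.gen)
    qed
  qed
  moreover have "kcomp n (Pk n) (\<lambda>Y W. F (Y, W) * Enm n m Y W) = (\<lambda>Z W. R (Z, W) * Enm n m Z W)"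
  proof (intro ext)
    fix Z W :: "nat \<Rightarrow> real"
    have pad: "(\<Sum>i<n. f i * ?a (Z, W) i) = (\<Sum>i<m. f i * cnj (zc W i))" for f
      using assms(1) by (intro sum.mono_neutral_cong_right) auto
    have integrand: "Pk n Z Y * (F (Y, W) * Enm n m Y W)
        = gauss_factor n Z * gauss_factor m W * (F (Y, W) * gauss_exp n (?a (Z, W)) (?b (Z, W)) Y)" for Y
      unfolding Pk_eq Enm_eq[OF assms(1)] gauss_exp_def sum.distrib pad
      by (simp add: power2_eq_square distrib_left exp_add mult_ac)
    have "kcomp n (Pk n) (\<lambda>Y W. F (Y, W) * Enm n m Y W) Z W
        = gauss_factor n Z * gauss_factor m W * (\<integral>Y. F (Y, W) * gauss_exp n (?a (Z, W)) (?b (Z, W)) Y \<partial>leb n)"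
      unfolding kcomp_def integrand by (rule integral_mult_right_zero)
    also have "\<dots> = gauss_factor n Z * gauss_factor m W * (R (Z, W) * exp (of_real pi * (\<Sum>i<n. ?a (Z, W) i * zc Z i)))"
      using int[of "(Z, W)"] by simp
    also have "\<dots> = R (Z, W) * Enm n m Z W"
      using pad[of "zc Z"] unfolding Enm_eq[OF assms(1)] by (simp add: mult_ac)
    finally show "kcomp n (Pk n) (\<lambda>Y W. F (Y, W) * Enm n m Y W) Z W = R (Z, W) * Enm n m Z W" .
  qed
  ultimately show ?thesis using that by blast
qed

lemma kcomp_Enm_Pk:
  assumes "m \<le> n" and "cpoly (hol_real_gens n m) F"
  obtains R where "cpoly (hol_gens n m) R"
    and "kcomp m (\<lambda>Z W. F (Z, W) * Enm n m Z W) (Pk m) = (\<lambda>Z V. R (Z, V) * Enm n m Z V)"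
proof -
  let ?G = "{(\<lambda>(Z, V). zc Z i) | i. i < n}"
  let ?a = "\<lambda>x i. cnj (zc (snd x) i)"
  let ?b = "\<lambda>x. zc (fst x)"
  have "cpoly ((\<lambda>g. g \<circ> fst) ` ?G \<union> (\<lambda>j (x, W). complex_of_real (W j)) ` {..<2 * m})
      (\<lambda>xW. F (fst (fst xW), snd xW))"
  proof (rule cpoly_comp[OF assms(2)], rule cpoly.gen)
    fix g assume "g \<in> hol_real_gens n m"
    then show "(\<lambda>xW. g (fst (fst xW), snd xW))
        \<in> (\<lambda>g. g \<circ> fst) ` ?G \<union> (\<lambda>j (x, W). complex_of_real (W j)) ` {..<2 * m}"
      unfolding hol_real_gens_def by (auto simp: image_iff o_def split_def)
  qed
  then have integrand_poly: "cpoly ((\<lambda>g. g \<circ> fst) ` ?G \<union> (\<lambda>j (x, W). complex_of_real (W j)) ` {..<2 * m})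
      (\<lambda>(x, W). F (fst x, W))"
    by (simp add: split_def)
  obtain R where R: "cpoly (?G \<union> {(\<lambda>x. ?a x i) | i. i < m} \<union> {(\<lambda>x. ?b x i) | i. i < m}) R"
    and int: "\<And>x. (\<integral>W. F (fst x, W) * gauss_exp m (?a x) (?b x) W \<partial>leb m)
           = R x * exp (of_real pi * (\<Sum>i<m. ?a x i * ?b x i))"
    using integral_cpoly_gauss_exp[OF integrand_poly, of ?a ?b] by blast
  have "cpoly (hol_gens n m) R"
    by (rule cpoly_mono[OF R]) (use assms(1) in \<open>auto simp: hol_gens_def split_def\<close>)
  moreover have "kcomp m (\<lambda>Z W. F (Z, W) * Enm n m Z W) (Pk m) = (\<lambda>Z V. R (Z, V) * Enm n m Z V)"
  proof (intro ext)
    fix Z V :: "nat \<Rightarrow> real"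
    have integrand: "F (Z, W) * Enm n m Z W * Pk m W V
        = gauss_factor n Z * gauss_factor m V * (F (Z, W) * gauss_exp m (?a (Z, V)) (?b (Z, V)) W)" for W
      unfolding Pk_eq Enm_eq[OF assms(1)] gauss_exp_def sum.distrib
      by (simp add: power2_eq_square distrib_left exp_add mult_ac)
    have "kcomp m (\<lambda>Z W. F (Z, W) * Enm n m Z W) (Pk m) Z V
        = gauss_factor n Z * gauss_factor m V * (\<integral>W. F (Z, W) * gauss_exp m (?a (Z, V)) (?b (Z, V)) W \<partial>leb m)"
      unfolding kcomp_def integrand by (rule integral_mult_right_zero)
    also have "\<dots> = gauss_factor n Z * gauss_factor m V * (R (Z, V) * exp (of_real pi * (\<Sum>i<m. cnj (zc V i) * zc Z i)))"
      using int[of "(Z, V)"] by simp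
    also have "\<dots> = R (Z, V) * Enm n m Z V"
      unfolding Enm_eq[OF assms(1)] by (simp add: mult_ac)
    finally show "kcomp m (\<lambda>Z W. F (Z, W) * Enm n m Z W) (Pk m) Z V = R (Z, V) * Enm n m Z V" .
  qed
  ultimately show ?thesis using that by blast
qed

theorem corollary3p3:
  fixes n m :: nat and A :: "(nat \<Rightarrow> real) \<Rightarrow> (nat \<Rightarrow> real) \<Rightarrow> complex"
  assumes "m \<le> n"
    and "cpoly (real_gens n m) (case_prod A)"
    and "\<forall>Z\<in>space (leb n). \<forall>Z''\<in>space (leb m).
           kcomp m (kcomp n (Pk n) (\<lambda>Z Z'. A Z Z' * Enm n m Z Z')) (Pk m) Z Z''
           = A Z Z'' * Enm n m Z Z''"
  shows "cpoly (hol_gens n m) (case_prod A)"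
proof -
  obtain R1 where R1: "cpoly (hol_real_gens n m) R1"
    and first: "kcomp n (Pk n) (\<lambda>Z Z'. A Z Z' * Enm n m Z Z') = (\<lambda>Z W. R1 (Z, W) * Enm n m Z W)"
    using kcomp_Pk_Enm[OF assms(1,2)] by auto
  obtain R where R: "cpoly (hol_gens n m) R"
    and second: "kcomp m (\<lambda>Z W. R1 (Z, W) * Enm n m Z W) (Pk m) = (\<lambda>Z V. R (Z, V) * Enm n m Z V)"
    using kcomp_Enm_Pk[OF assms(1) R1] by blast
  have on_space: "A Z V = R (Z, V)" if "Z \<in> space (leb n)" "V \<in> space (leb m)" for Z V
    using assms(3) that unfolding first second by (simp add: Enm_def)
  have "case_prod A = R"
  proof
    fix x :: "(nat \<Rightarrow> real) \<times> (nat \<Rightarrow> real)"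
    obtain Z V where x: "x = (Z, V)" by fastforce
    txt \<open>The hypothesis only covers extensional points; neither side sees the other coordinates.\<close>
    let ?x' = "(restrict Z {..<2 * n}, restrict V {..<2 * m})"
    have "case_prod A x = case_prod A ?x'"
      by (rule cpoly_eq_if_gens_eq[OF assms(2)]) (auto simp: x real_gens_def)
    moreover have "R x = R ?x'"
      by (rule cpoly_eq_if_gens_eq[OF R]) (auto simp: x hol_gens_def zc_def)
    ultimately show "case_prod A x = R x"
      using on_space by (simp add: leb_def space_PiM)
  qed
  with R show ?thesis by simp
qed

end
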